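(* Let $\{\mathcal{C}_n\}$ be a sequence of binary linear codes with blocklengths $N_n\to\infty$ and rates $r_n\to r$ for some $r\in(0,1)$. Suppose there is a constant $C>0$, independent of $p$ and $n$, such that the average EXIT function $h^{(n)}$ of $\mathcal{C}_n$ satisfies $$\frac{d h^{(n)}(p)}{dp}\ge C\log(N_n)\,h^{(n)}(p)\big(1-h^{(n)}(p)\big)\quad\text{for all }0<p<1,$$ and suppose the minimum distances $d^{(n)}_{\min}$ satisfy $\lim_{n\to\infty}\frac{\log d^{(n)}_{\min}}{\log N_n}=1$. Then $\{\mathcal{C}_n\}$ is capacity achieving on the BEC under block-MAP decoding.
   Context: Binary linear codes are assumed proper and of minimum distance at least $2$; rate $=K/N$; $\log$ is the natural logarithm. A uniform codeword $\underline{X}$ is sent over $\mathrm{BEC}(p)$ (each bit erased independently with probability $p$), giving $\underline{Y}$. The average EXIT function is $h(p)=\frac1N\sum_{i=1}^N H(X_i\mid\underline{Y}_{\sim i})$ (entropy in bits; $\underline{Y}_{\sim i}$ omits coordinate $i$). The block-MAP erasure probability $P_B(p)$ is the probability that $\underline{X}$ is not uniquely determined by $\underline{Y}$. A sequence of codes with rates $r_n\to r\in(0,1)$ is capacity achieving on the BEC under block-MAP decoding if $\lim_n P_B^{(n)}(p)=0$ for every $p\in[0,1-r)$. *)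

theory Defs
  imports "HOL-Analysis.Analysis"
begin

text \<open>A binary word of length N is represented by its support, a subset of {..<N};
  addition over GF(2) is symmetric difference.\<close>

definition sym_diff :: "nat set \<Rightarrow> nat set \<Rightarrow> nat set" where
  "sym_diff a b = (a - b) \<union> (b - a)"

definition binary_linear_code :: "nat \<Rightarrow> nat set set \<Rightarrow> bool" where
  "binary_linear_code N C \<longleftrightarrow> (\<forall>c\<in>C. c \<subseteq> {..<N}) \<and> {} \<in> C \<and>
     (\<forall>a\<in>C. \<forall>b\<in>C. sym_diff a b \<in> C)"

definition proper_code :: "nat \<Rightarrow> nat set set \<Rightarrow> bool" where
  "proper_code N C \<longleftrightarrow> (\<forall>i<N. \<exists>c\<in>C. i \<in> c)"

definition min_dist :: "nat set set \<Rightarrow> nat" where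
  "min_dist C = Min (card ` (C - {{}}))"

definition code_rate :: "nat \<Rightarrow> nat set set \<Rightarrow> real" where
  "code_rate N C = log 2 (real (card C)) / real N"

definition erasure_prob :: "nat \<Rightarrow> real \<Rightarrow> nat set \<Rightarrow> real" where
  "erasure_prob N p E = p ^ card E * (1 - p) ^ (N - card E)"

text \<open>Joint law of (uniform codeword X, erasure pattern E) on the finite sample space
  C \<times> Pow {..<N}.\<close>
definition joint_w :: "nat \<Rightarrow> nat set set \<Rightarrow> real \<Rightarrow> nat set \<times> nat set \<Rightarrow> real" where
  "joint_w N C p = (\<lambda>(x, E). erasure_prob N p E / real (card C))"

definition sample_space :: "nat \<Rightarrow> nat set set \<Rightarrow> (nat set \<times> nat set) set" where
  "sample_space N C = C \<times> Pow {..<N}"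

definition cond_entropy :: "'w set \<Rightarrow> ('w \<Rightarrow> real) \<Rightarrow> ('w \<Rightarrow> 'a) \<Rightarrow> ('w \<Rightarrow> 'b) \<Rightarrow> real" where
  "cond_entropy \<Omega> w A B =
     - (\<Sum>\<omega>\<in>\<Omega>. w \<omega> * log 2
          ((\<Sum>\<omega>'\<in>{\<omega>'\<in>\<Omega>. A \<omega>' = A \<omega> \<and> B \<omega>' = B \<omega>}. w \<omega>') /
           (\<Sum>\<omega>'\<in>{\<omega>'\<in>\<Omega>. B \<omega>' = B \<omega>}. w \<omega>')))"

text \<open>Channel output Y for codeword x and erasure pattern E: the erased positions
  together with the unerased codeword bits.\<close>
definition channel_out :: "nat \<Rightarrow> nat set \<times> nat set \<Rightarrow> nat set \<times> nat set" where
  "channel_out N = (\<lambda>(x, E). (E, x \<inter> ({..<N} - E)))"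

text \<open>Y with coordinate i omitted.\<close>
definition channel_out_ext :: "nat \<Rightarrow> nat \<Rightarrow> nat set \<times> nat set \<Rightarrow> nat set \<times> nat set" where
  "channel_out_ext N i = (\<lambda>(x, E). (E - {i}, x \<inter> ({..<N} - E - {i})))"

definition exit_fun :: "nat \<Rightarrow> nat set set \<Rightarrow> real \<Rightarrow> real" where
  "exit_fun N C p = (1 / real N) * (\<Sum>i<N.
     cond_entropy (sample_space N C) (joint_w N C p) (\<lambda>(x, E). i \<in> x) (channel_out_ext N i))"

definition block_MAP_erasure :: "nat \<Rightarrow> nat set set \<Rightarrow> real \<Rightarrow> real" where
  "block_MAP_erasure N C p = (\<Sum>\<omega>\<in>sample_space N C.
     (if \<exists>x'\<in>C. x' \<noteq> fst \<omega> \<and> channel_out N (x', snd \<omega>) = channel_out N \<omega>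
      then joint_w N C p \<omega> else 0))"

definition capacity_achieving_BEC :: "(nat \<Rightarrow> nat) \<Rightarrow> (nat \<Rightarrow> nat set set) \<Rightarrow> real \<Rightarrow> bool" where
  "capacity_achieving_BEC N C r \<longleftrightarrow>
     (\<forall>p. 0 \<le> p \<and> p < 1 - r \<longrightarrow> (\<lambda>n. block_MAP_erasure (N n) (C n) p) \<longlonglongrightarrow> 0)"

end

theory Submission
  imports Defs
begin

text \<open>On the BEC, H(X_i | Y_~i) is the probability that bit i cannot be recovered from the other
  unerased bits, i.e. that some codeword containing i is supported in the erasures plus i. Two
  counting facts about linear codes bound the average h of these probabilities: unerased
  ambiguous bits are free coordinates of the code punctured to the unerased positions, giving the
  area-type bound (1 - p) h(p) <= rate; and a block failure exhibits an erased nonzero codeword,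
  all of whose at least d_min positions are ambiguous, giving d_min P_B(p) <= N h(p). The
  derivative hypothesis makes the logit of h grow at rate K log N, so a margin \<delta> below capacity
  yields h(p) = O(N^(-K \<delta>)), and d_min = N^(1 - o(1)) then forces P_B(p) \<rightarrow> 0.\<close>

lemma mem_sym_diff [simp]: "x \<in> sym_diff a b \<longleftrightarrow> (x \<in> a) \<noteq> (x \<in> b)"
  unfolding sym_diff_def by auto

lemma sym_diff_eq_empty_iff [simp]: "sym_diff a b = {} \<longleftrightarrow> a = b"
  unfolding sym_diff_def by auto

lemma sum_Pow_binomial_weights:
  fixes p :: real
  assumes "finite A"
  shows "(\<Sum>E\<in>Pow A. p ^ card E * (1 - p) ^ (card A - card E)) = 1"
proof -
  have "(\<Sum>E\<in>Pow A. p ^ card E * (1 - p) ^ (card A - card E))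
      = (\<Sum>k\<le>card A. \<Sum>E\<in>{E\<in>Pow A. card E = k}. p ^ card E * (1 - p) ^ (card A - card E))"
    using assms by (intro sum.group [symmetric]) (auto intro: card_mono)
  also have "\<dots> = (\<Sum>k\<le>card A. of_nat (card A choose k) * p ^ k * (1 - p) ^ (card A - k))"
    using n_subsets[OF assms] by (intro sum.cong) (simp_all add: Pow_def)
  also have "\<dots> = (p + (1 - p)) ^ card A"
    by (rule binomial_ring [symmetric])
  finally show ?thesis by simp
qed

lemma sum_erasure_prob: "(\<Sum>E\<in>Pow {..<N}. erasure_prob N p E) = 1"
  unfolding erasure_prob_def using sum_Pow_binomial_weights[of "{..<N}" p] by simp

lemma erasure_prob_nonneg: "0 \<le> p \<Longrightarrow> p \<le> 1 \<Longrightarrow> 0 \<le> erasure_prob N p E"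
  unfolding erasure_prob_def by simp

lemma erasure_prob_pos: "0 < p \<Longrightarrow> p < 1 \<Longrightarrow> 0 < erasure_prob N p E"
  unfolding erasure_prob_def by simp

lemma erasure_prob_insert:
  assumes "i < N" "E \<subseteq> {..<N} - {i}"
  shows "(1 - p) * erasure_prob N p (insert i E) = p * erasure_prob N p E"
proof -
  have "finite E" "i \<notin> E" using assms finite_subset by auto
  then have "card (insert i E) = Suc (card E)" by simp
  moreover have "card E < N"
    using assms psubset_card_mono[of "{..<N}" E] by auto
  ultimately have "N - card E = Suc (N - card (insert i E))" by simp
  with \<open>card (insert i E) = Suc (card E)\<close> show ?thesis unfolding erasure_prob_def by simp
qed

text \<open>The erasure of bit i is independent of any event that does not look at position i.\<close>
lemma sum_erasure_prob_unerased:
  fixes p :: real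
  assumes i: "i < N" and g: "\<And>E. g (insert i E) = g E"
  shows "(1 - p) * (\<Sum>E\<in>Pow {..<N}. erasure_prob N p E * g E)
       = (\<Sum>E\<in>Pow {..<N}. erasure_prob N p E * g E * of_bool (i \<notin> E))"
proof -
  define U where "U = {..<N} - {i}"
  have Pow_split: "Pow {..<N} = Pow U \<union> insert i ` Pow U"
    using i Pow_insert[of i U] unfolding U_def by (simp add: insert_absorb)
  have inj: "inj_on (insert i) (Pow U)" unfolding U_def inj_on_def by blast
  have sum_split: "sum f (Pow {..<N}) = sum f (Pow U) + (\<Sum>E\<in>Pow U. f (insert i E))" for f
  proof -
    have "sum f (Pow {..<N}) = sum f (Pow U) + sum f (insert i ` Pow U)"
      unfolding Pow_split by (rule sum.union_disjoint) (auto simp: U_def)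
    then show ?thesis by (simp add: sum.reindex[OF inj])
  qed
  have "(\<Sum>E\<in>Pow {..<N}. erasure_prob N p E * g E)
      = (\<Sum>E\<in>Pow U. erasure_prob N p E * g E) + (\<Sum>E\<in>Pow U. erasure_prob N p (insert i E) * g E)"
    by (simp add: sum_split g)
  moreover have "(1 - p) * (\<Sum>E\<in>Pow U. erasure_prob N p (insert i E) * g E)
      = p * (\<Sum>E\<in>Pow U. erasure_prob N p E * g E)"
    unfolding sum_distrib_left
    by (intro sum.cong refl) (simp add: erasure_prob_insert[OF i, of _ p, folded U_def, symmetric])
  moreover have "(\<Sum>E\<in>Pow {..<N}. erasure_prob N p E * g E * of_bool (i \<notin> E))
      = (\<Sum>E\<in>Pow U. erasure_prob N p E * g E)"
    by (simp add: sum_split) (intro sum.cong; auto simp: U_def)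
  ultimately show ?thesis by (simp add: algebra_simps)
qed

text \<open>For an erasure pattern E: bit_ambiguous C i E says that Y_~i does not determine X_i, and
  codeword_erased C E that Y does not determine X.\<close>
definition bit_ambiguous :: "nat set set \<Rightarrow> nat \<Rightarrow> nat set \<Rightarrow> bool" where
  "bit_ambiguous C i E \<longleftrightarrow> (\<exists>c\<in>C. i \<in> c \<and> c \<subseteq> insert i E)"

definition codeword_erased :: "nat set set \<Rightarrow> nat set \<Rightarrow> bool" where
  "codeword_erased C E \<longleftrightarrow> (\<exists>c\<in>C. c \<noteq> {} \<and> c \<subseteq> E)"

context
  fixes N :: nat and C :: "nat set set"
  assumes code: "binary_linear_code N C"
begin

lemma codeword_subset: "c \<in> C \<Longrightarrow> c \<subseteq> {..<N}"
  using code unfolding binary_linear_code_def by auto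

lemma empty_codeword: "{} \<in> C"
  using code unfolding binary_linear_code_def by auto

lemma sym_diff_codeword: "a \<in> C \<Longrightarrow> b \<in> C \<Longrightarrow> sym_diff a b \<in> C"
  using code unfolding binary_linear_code_def by auto

lemma finite_code: "finite C"
  by (rule finite_subset[of C "Pow {..<N}"]) (auto dest: codeword_subset)

lemma card_code_pos: "card C > 0"
  using finite_code empty_codeword card_gt_0_iff by blast

lemma sym_diff_subset_if_agree:
  assumes "a \<in> C" "b \<in> C" "a \<inter> ({..<N} - A) = b \<inter> ({..<N} - A)"
  shows "sym_diff a b \<subseteq> A"
  using assms codeword_subset by fastforce

lemma sum_sample_space_erasures:
  "(\<Sum>\<omega>\<in>sample_space N C. joint_w N C p \<omega> * g (snd \<omega>))
     = (\<Sum>E\<in>Pow {..<N}. erasure_prob N p E * g E)"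
proof -
  have "(\<Sum>\<omega>\<in>sample_space N C. joint_w N C p \<omega> * g (snd \<omega>))
      = real (card C) * (\<Sum>E\<in>Pow {..<N}. erasure_prob N p E / real (card C) * g E)"
    unfolding sample_space_def sum.cartesian_product' joint_w_def by simp
  then show ?thesis
    using card_code_pos by (simp add: sum_distrib_left)
qed

lemma card_agreeing_codewords:
  fixes S :: "nat set" and i :: nat
  assumes x: "x \<in> C"
  defines "X \<equiv> {y\<in>C. y \<inter> S = x \<inter> S}"
  shows "card X = (if \<exists>c\<in>C. i \<in> c \<and> c \<inter> S = {} then 2 else 1) * card {y\<in>X. i \<in> y \<longleftrightarrow> i \<in> x}"
proof (cases "\<exists>c\<in>C. i \<in> c \<and> c \<inter> S = {}")
  case False
  have "sym_diff x y \<in> C \<and> sym_diff x y \<inter> S = {}" if "y \<in> X" for y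
    using that x sym_diff_codeword unfolding X_def by auto
  then have "{y\<in>X. i \<in> y \<longleftrightarrow> i \<in> x} = X"
    using False by fastforce
  then show ?thesis unfolding if_not_P[OF False] by simp
next
  case True
  then obtain c where c: "c \<in> C" "i \<in> c" "c \<inter> S = {}" by blast
  define Y where "Y = {y\<in>X. i \<in> y \<longleftrightarrow> i \<in> x}"
  have finX: "finite X" unfolding X_def using finite_code by simp
  \<comment> \<open>adding c flips bit i and fixes S, so it swaps Y with its complement in X\<close>
  have "bij_betw (\<lambda>y. sym_diff y c) Y (X - Y)"
    by (rule bij_betw_byWitness[where f' = "\<lambda>y. sym_diff y c"])
      (use c sym_diff_codeword in \<open>auto simp: X_def Y_def sym_diff_def\<close>)
  then have "card (X - Y) = card Y" by (simp add: bij_betw_same_card)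
  moreover have "card X = card Y + card (X - Y)"
    using finX by (simp add: Y_def card_Diff_subset card_mono)
  ultimately show ?thesis unfolding if_P[OF True] Y_def by simp
qed

lemma channel_out_ext_eq_iff:
  "channel_out_ext N i (x', E') = channel_out_ext N i (x, E) \<longleftrightarrow>
     E' - {i} = E - {i} \<and> x' \<inter> ({..<N} - E - {i}) = x \<inter> ({..<N} - E - {i})"
proof -
  have "{..<N} - E' - {i} = {..<N} - E - {i}" if "E' - {i} = E - {i}"
    using that by blast
  then show ?thesis unfolding channel_out_ext_def by auto
qed

lemma cond_prob_bit_given_ext_output:
  fixes i :: nat
  assumes p: "0 < p" "p < 1" and \<omega>: "\<omega> \<in> sample_space N C"
  defines "A \<equiv> \<lambda>(y :: nat set, E :: nat set). i \<in> y" and "B \<equiv> channel_out_ext N i"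
  shows "(\<Sum>\<omega>'\<in>{\<omega>'\<in>sample_space N C. A \<omega>' = A \<omega> \<and> B \<omega>' = B \<omega>}. joint_w N C p \<omega>') /
         (\<Sum>\<omega>'\<in>{\<omega>'\<in>sample_space N C. B \<omega>' = B \<omega>}. joint_w N C p \<omega>')
       = (if bit_ambiguous C i (snd \<omega>) then 1 / 2 else 1)"
proof -
  obtain x E where xE: "\<omega> = (x, E)" by force
  have x: "x \<in> C" and E: "E \<subseteq> {..<N}" using \<omega> unfolding xE sample_space_def by auto
  define S where "S = {..<N} - E - {i}"
  define X where "X = {y\<in>C. y \<inter> S = x \<inter> S}"
  define Es where "Es = {E'\<in>Pow {..<N}. E' - {i} = E - {i}}"
  have fiber: "{\<omega>'\<in>sample_space N C. B \<omega>' = B \<omega>} = X \<times> Es"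
    and fiber_bit: "{\<omega>'\<in>sample_space N C. A \<omega>' = A \<omega> \<and> B \<omega>' = B \<omega>}
                    = {y\<in>X. i \<in> y \<longleftrightarrow> i \<in> x} \<times> Es"
    unfolding A_def B_def X_def Es_def S_def sample_space_def xE
    by (auto simp: channel_out_ext_eq_iff)
  have sum_product: "(\<Sum>\<omega>\<in>Y \<times> Es. joint_w N C p \<omega>)
      = real (card Y) * ((\<Sum>E'\<in>Es. erasure_prob N p E') / real (card C))" for Y
    unfolding sum.cartesian_product' joint_w_def by (simp add: sum_divide_distrib)
  define Y where "Y = {y\<in>X. i \<in> y \<longleftrightarrow> i \<in> x}"
  have "(\<exists>c\<in>C. i \<in> c \<and> c \<inter> S = {}) \<longleftrightarrow> bit_ambiguous C i E"
    using codeword_subset unfolding bit_ambiguous_def S_def by blast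
  then have card_X: "real (card X) = (if bit_ambiguous C i E then 2 else 1) * real (card Y)"
    using card_agreeing_codewords[OF x, of S i] unfolding X_def Y_def by simp
  have "card Y > 0"
    using x finite_code by (auto simp: X_def Y_def card_gt_0_iff)
  moreover have "(\<Sum>E'\<in>Es. erasure_prob N p E') > 0"
    by (rule sum_pos2[of _ E]) (use E erasure_prob_pos[OF p] in \<open>auto simp: Es_def less_imp_le\<close>)
  ultimately show ?thesis
    using card_code_pos
    unfolding fiber fiber_bit[folded Y_def] sum_product card_X xE[THEN arg_cong[of _ _ snd]] by auto
qed

lemma cond_entropy_bit_given_ext_output:
  assumes p: "0 < p" "p < 1"
  shows "cond_entropy (sample_space N C) (joint_w N C p) (\<lambda>(x, E). i \<in> x) (channel_out_ext N i)
       = (\<Sum>E\<in>Pow {..<N}. erasure_prob N p E * of_bool (bit_ambiguous C i E))"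
proof -
  have "cond_entropy (sample_space N C) (joint_w N C p) (\<lambda>(x, E). i \<in> x) (channel_out_ext N i)
      = (\<Sum>\<omega>\<in>sample_space N C. joint_w N C p \<omega> * of_bool (bit_ambiguous C i (snd \<omega>)))"
    unfolding cond_entropy_def sum_negf[symmetric]
    using log_divide[of 2 1 2] by (intro sum.cong refl) (simp add: cond_prob_bit_given_ext_output[OF p])
  also have "\<dots> = (\<Sum>E\<in>Pow {..<N}. erasure_prob N p E * of_bool (bit_ambiguous C i E))"
    by (rule sum_sample_space_erasures)
  finally show ?thesis .
qed

lemma exit_fun_eq:
  assumes "0 < p" "p < 1"
  shows "exit_fun N C p
       = (\<Sum>i<N. \<Sum>E\<in>Pow {..<N}. erasure_prob N p E * of_bool (bit_ambiguous C i E)) / N"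
  unfolding exit_fun_def using cond_entropy_bit_given_ext_output[OF assms] by simp

lemma exit_fun_nonneg: "0 < p \<Longrightarrow> p < 1 \<Longrightarrow> 0 \<le> exit_fun N C p"
  unfolding exit_fun_eq by (intro divide_nonneg_nonneg sum_nonneg) (auto simp: erasure_prob_nonneg)

lemma exit_fun_le_one:
  assumes p: "0 < p" "p < 1"
  shows "exit_fun N C p \<le> 1"
proof -
  have "(\<Sum>i<N. \<Sum>E\<in>Pow {..<N}. erasure_prob N p E * of_bool (bit_ambiguous C i E))
      \<le> (\<Sum>i<N. \<Sum>E\<in>Pow {..<N}. erasure_prob N p E)"
    using erasure_prob_nonneg p by (intro sum_mono) (simp add: mult_left_le)
  then show ?thesis unfolding exit_fun_eq[OF p] sum_erasure_prob by (auto simp: divide_le_eq_1)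
qed

lemma sum_erasure_prob_of_bool_swap:
  "(\<Sum>i<N. \<Sum>E\<in>Pow {..<N}. erasure_prob N p E * of_bool (P i E))
     = (\<Sum>E\<in>Pow {..<N}. erasure_prob N p E * card {i\<in>{..<N}. P i E})"
  by (subst sum.swap) (simp add: Int_def mult.commute)

text \<open>Flipping an unerased ambiguous bit is achieved by adding the codeword that witnesses its
  ambiguity, so the codewords restricted to the unerased positions realise every pattern on
  those bits.\<close>
lemma card_unerased_ambiguous_le_log_card:
  assumes E: "E \<subseteq> {..<N}"
  shows "real (card {i\<in>{..<N}. i \<notin> E \<and> bit_ambiguous C i E}) \<le> log 2 (card C)"
proof -
  define P where "P = {i\<in>{..<N}. i \<notin> E \<and> bit_ambiguous C i E}"
  define V where "V = {..<N} - E"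
  have "T \<in> (\<lambda>c. c \<inter> V) ` C" if "T \<subseteq> P" for T
  proof -
    have "finite T" using that finite_subset[of T P] unfolding P_def by auto
    then show ?thesis using that
    proof (induction T rule: finite_induct)
      case empty
      show ?case using empty_codeword by force
    next
      case (insert j T)
      then obtain c where c: "c \<in> C" "c \<inter> V = T" by blast
      have "j \<in> P" using insert.prems by simp
      then have j: "j \<in> V" "bit_ambiguous C j E" unfolding P_def V_def by auto
      then obtain d where "d \<in> C" "j \<in> d" "d \<subseteq> insert j E"
        unfolding bit_ambiguous_def by blast
      with j have d: "d \<in> C" "d \<inter> V = {j}" unfolding V_def by auto
      have "sym_diff c d \<inter> V = sym_diff (c \<inter> V) (d \<inter> V)" by auto
      also have "\<dots> = insert j T" unfolding c(2) d(2) using insert.hyps(2) by auto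
      finally have "sym_diff c d \<inter> V = insert j T" .
      then show ?case by (rule image_eqI[OF sym sym_diff_codeword[OF c(1) d(1)]])
    qed
  qed
  then have "card (Pow P) \<le> card ((\<lambda>c. c \<inter> V) ` C)"
    using finite_code by (intro card_mono finite_imageI) auto
  also have "\<dots> \<le> card C" using finite_code by (rule card_image_le)
  finally have "2 ^ card P \<le> card C" by (simp add: card_Pow P_def)
  then show ?thesis unfolding P_def by (rule le_log2_of_power)
qed

lemma exit_fun_le_rate:
  assumes p: "0 < p" "p < 1" and N: "0 < N"
  shows "(1 - p) * exit_fun N C p \<le> code_rate N C"
proof -
  have "real N * exit_fun N C p
      = (\<Sum>i<N. \<Sum>E\<in>Pow {..<N}. erasure_prob N p E * of_bool (bit_ambiguous C i E))"
    unfolding exit_fun_eq[OF p] using N by simp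
  then have "(1 - p) * (real N * exit_fun N C p)
      = (\<Sum>i<N. (1 - p) * (\<Sum>E\<in>Pow {..<N}. erasure_prob N p E * of_bool (bit_ambiguous C i E)))"
    by (simp only: sum_distrib_left)
  also have "\<dots> = (\<Sum>i<N. \<Sum>E\<in>Pow {..<N}.
      erasure_prob N p E * of_bool (bit_ambiguous C i E) * of_bool (i \<notin> E))"
    by (intro sum.cong refl sum_erasure_prob_unerased) (simp_all add: bit_ambiguous_def)
  also have "\<dots> = (\<Sum>i<N. \<Sum>E\<in>Pow {..<N}.
      erasure_prob N p E * of_bool (i \<notin> E \<and> bit_ambiguous C i E))"
    by (intro sum.cong refl) (simp add: of_bool_conj mult_ac)
  also have "\<dots> = (\<Sum>E\<in>Pow {..<N}. erasure_prob N p E * card {i\<in>{..<N}. i \<notin> E \<and> bit_ambiguous C i E})"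
    by (rule sum_erasure_prob_of_bool_swap)
  also have "\<dots> \<le> (\<Sum>E\<in>Pow {..<N}. erasure_prob N p E * log 2 (card C))"
    using card_unerased_ambiguous_le_log_card erasure_prob_nonneg p
    by (intro sum_mono mult_left_mono) auto
  also have "\<dots> = log 2 (card C)"
    unfolding sum_distrib_right[symmetric] sum_erasure_prob by simp
  finally show ?thesis
    using N unfolding code_rate_def by (simp add: pos_le_divide_eq mult_ac)
qed

lemma ambiguous_output_iff_codeword_erased:
  assumes \<omega>: "\<omega> \<in> sample_space N C"
  shows "(\<exists>x'\<in>C. x' \<noteq> fst \<omega> \<and> channel_out N (x', snd \<omega>) = channel_out N \<omega>)
     \<longleftrightarrow> codeword_erased C (snd \<omega>)"
proof -
  obtain x E where xE: "\<omega> = (x, E)" "x \<in> C" using \<omega> unfolding sample_space_def by auto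
  have "codeword_erased C E" if "x' \<in> C" "x' \<noteq> x" "channel_out N (x', E) = channel_out N (x, E)" for x'
  proof -
    have "sym_diff x x' \<subseteq> E"
      using that(3) by (intro sym_diff_subset_if_agree[OF xE(2) that(1)]) (simp add: channel_out_def)
    moreover have "sym_diff x x' \<noteq> {}" using that(2) by simp
    ultimately show ?thesis
      using sym_diff_codeword[OF xE(2) that(1)] unfolding codeword_erased_def by blast
  qed
  moreover have "\<exists>x'\<in>C. x' \<noteq> x \<and> channel_out N (x', E) = channel_out N (x, E)" if erased: "codeword_erased C E"
  proof -
    obtain c where c: "c \<in> C" "c \<noteq> {}" "c \<subseteq> E" using erased unfolding codeword_erased_def by blast
    then have "sym_diff x c \<noteq> x" "channel_out N (sym_diff x c, E) = channel_out N (x, E)"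
      unfolding channel_out_def by auto
    then show ?thesis using sym_diff_codeword[OF xE(2) c(1)] by blast
  qed
  ultimately show ?thesis unfolding xE(1) by (metis fst_conv snd_conv)
qed

lemma block_MAP_erasure_eq:
  "block_MAP_erasure N C p = (\<Sum>E\<in>Pow {..<N}. erasure_prob N p E * of_bool (codeword_erased C E))"
proof -
  have "block_MAP_erasure N C p
      = (\<Sum>\<omega>\<in>sample_space N C. joint_w N C p \<omega> * of_bool (codeword_erased C (snd \<omega>)))"
    unfolding block_MAP_erasure_def
    by (intro sum.cong refl) (simp add: ambiguous_output_iff_codeword_erased)
  also have "\<dots> = (\<Sum>E\<in>Pow {..<N}. erasure_prob N p E * of_bool (codeword_erased C E))"
    by (rule sum_sample_space_erasures)
  finally show ?thesis .
qed

lemma block_MAP_erasure_nonneg: "0 \<le> p \<Longrightarrow> p \<le> 1 \<Longrightarrow> 0 \<le> block_MAP_erasure N C p"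
  unfolding block_MAP_erasure_eq by (simp add: erasure_prob_nonneg sum_nonneg)

lemma block_MAP_erasure_zero: "block_MAP_erasure N C 0 = 0"
proof -
  have "erasure_prob N 0 E = 0" if "E \<in> Pow {..<N}" "codeword_erased C E" for E
  proof -
    have "E \<noteq> {}" "finite E" using that finite_subset unfolding codeword_erased_def by auto
    then show ?thesis unfolding erasure_prob_def by (simp add: card_gt_0_iff)
  qed
  then show ?thesis unfolding block_MAP_erasure_eq by simp
qed

text \<open>Every position of an erased nonzero codeword is an ambiguous bit.\<close>
lemma min_dist_le_card_ambiguous:
  assumes "codeword_erased C E"
  shows "min_dist C \<le> card {i\<in>{..<N}. bit_ambiguous C i E}"
proof -
  obtain c where c: "c \<in> C" "c \<noteq> {}" "c \<subseteq> E" using assms unfolding codeword_erased_def by blast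
  have "min_dist C \<le> card c"
    unfolding min_dist_def using c finite_code by (intro Min_le) auto
  also have "\<dots> \<le> card {i\<in>{..<N}. bit_ambiguous C i E}"
  proof (rule card_mono)
    show "c \<subseteq> {i\<in>{..<N}. bit_ambiguous C i E}"
      using c codeword_subset[OF c(1)] unfolding bit_ambiguous_def by blast
  qed simp
  finally show ?thesis .
qed

lemma min_dist_block_MAP_erasure_le:
  assumes p: "0 < p" "p < 1"
  shows "real (min_dist C) * block_MAP_erasure N C p \<le> real N * exit_fun N C p"
proof -
  have "real (min_dist C) * block_MAP_erasure N C p
      = (\<Sum>E\<in>Pow {..<N}. erasure_prob N p E * (real (min_dist C) * of_bool (codeword_erased C E)))"
    unfolding block_MAP_erasure_eq sum_distrib_left by (simp add: mult_ac)
  also have "\<dots> \<le> (\<Sum>E\<in>Pow {..<N}. erasure_prob N p E * card {i\<in>{..<N}. bit_ambiguous C i E})"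
    using min_dist_le_card_ambiguous erasure_prob_nonneg p
    by (intro sum_mono mult_left_mono) auto
  also have "\<dots> = real N * exit_fun N C p"
    unfolding exit_fun_eq[OF p] sum_erasure_prob_of_bool_swap[symmetric] by simp
  finally show ?thesis .
qed

end

lemma logistic_growth_bound:
  fixes h h' :: "real \<Rightarrow> real" and a b \<kappa> \<theta> :: real
  assumes ab: "a \<le> b"
    and range: "\<And>q. a \<le> q \<Longrightarrow> q \<le> b \<Longrightarrow> 0 \<le> h q \<and> h q \<le> 1"
    and deriv: "\<And>q. a \<le> q \<Longrightarrow> q \<le> b \<Longrightarrow>
      (h has_real_derivative h' q) (at q) \<and> \<kappa> * h q * (1 - h q) \<le> h' q"
    and \<kappa>: "0 \<le> \<kappa>" and \<theta>: "h b \<le> \<theta>" "\<theta> < 1"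
  shows "h a \<le> \<theta> / (1 - \<theta>) * exp (- \<kappa> * (b - a))"
proof (cases "h a = 0")
  case True
  then show ?thesis using range[OF order_refl ab] range[OF ab order_refl] \<theta> by simp
next
  case False
  have mono: "h x \<le> h y" if "a \<le> x" "x \<le> y" "y \<le> b" for x y
  proof (rule DERIV_nonneg_imp_nondecreasing[OF \<open>x \<le> y\<close>])
    fix q assume "x \<le> q" "q \<le> y"
    then have "a \<le> q" "q \<le> b" using that by linarith+
    then show "\<exists>y. (h has_real_derivative y) (at q) \<and> 0 \<le> y"
      using deriv range \<kappa> by (meson mult_nonneg_nonneg order_trans diff_ge_0_iff_ge)
  qed
  have h_pos: "0 < h a" using False range[OF order_refl ab] by simp
  have h_between: "0 < h q \<and> h q < 1" if "a \<le> q" "q \<le> b" for q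
    using mono[OF order_refl that] mono[OF that order_refl] h_pos \<theta> by linarith
  \<comment> \<open>the logit of h grows at least at rate \<kappa>\<close>
  define \<phi> where "\<phi> q = ln (h q) - ln (1 - h q) - \<kappa> * q" for q
  have "\<phi> a \<le> \<phi> b"
  proof (rule DERIV_nonneg_imp_nondecreasing[OF ab])
    fix q assume q: "a \<le> q" "q \<le> b"
    have hq: "0 < h q" "h q < 1" using h_between[OF q] by auto
    have "(\<phi> has_real_derivative h' q / h q + h' q / (1 - h q) - \<kappa>) (at q)"
      unfolding \<phi>_def using deriv[OF q] hq
      by (auto intro!: derivative_eq_intros simp: field_simps)
    moreover have "h' q / h q + h' q / (1 - h q) - \<kappa> = (h' q - \<kappa> * h q * (1 - h q)) / (h q * (1 - h q))"
      using hq by (simp add: field_simps)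
    moreover have "0 \<le> (h' q - \<kappa> * h q * (1 - h q)) / (h q * (1 - h q))"
      using deriv[OF q] hq by simp
    ultimately show "\<exists>y. (\<phi> has_real_derivative y) (at q) \<and> 0 \<le> y" by auto
  qed
  moreover have "ln (h b) - ln (1 - h b) \<le> ln \<theta> - ln (1 - \<theta>)"
    using h_between[OF ab order_refl] \<theta> by (intro diff_mono) auto
  ultimately have "ln (h a / (1 - h a)) \<le> ln (\<theta> / (1 - \<theta>) * exp (- \<kappa> * (b - a)))"
    using h_between[OF order_refl ab] h_between[OF ab order_refl] \<theta>
    by (simp add: \<phi>_def ln_div ln_mult algebra_simps)
  then have "h a / (1 - h a) \<le> \<theta> / (1 - \<theta>) * exp (- \<kappa> * (b - a))"
    using h_between[OF order_refl ab] h_between[OF ab order_refl] \<theta> by simp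
  moreover have "h a \<le> h a / (1 - h a)"
    using h_between[OF order_refl ab] by (simp add: field_simps)
  ultimately show ?thesis by linarith
qed


lemma min_dist_block_MAP_erasure_le_powr:
  fixes K \<theta> \<delta> :: real
  assumes code: "binary_linear_code N C" and N: "0 < N"
    and p: "0 < p" "0 < \<delta>" "p + \<delta> < 1"
    and rate: "code_rate N C \<le> \<theta> * (1 - (p + \<delta>))" and \<theta>: "\<theta> < 1" and K: "0 \<le> K"
    and exit_deriv: "\<And>q. 0 < q \<Longrightarrow> q < 1 \<Longrightarrow> exit_fun N C differentiable (at q) \<and>
      K * ln (real N) * exit_fun N C q * (1 - exit_fun N C q) \<le> deriv (exit_fun N C) q"
  shows "real (min_dist C) * block_MAP_erasure N C p \<le> \<theta> / (1 - \<theta>) * real N powr (1 - K * \<delta>)"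
proof -
  have "(1 - (p + \<delta>)) * exit_fun N C (p + \<delta>) \<le> code_rate N C"
    using exit_fun_le_rate[OF code _ _ N, of "p + \<delta>"] p by simp
  also have "\<dots> \<le> \<theta> * (1 - (p + \<delta>))" by (rule rate)
  finally have "exit_fun N C (p + \<delta>) * (1 - (p + \<delta>)) \<le> \<theta> * (1 - (p + \<delta>))"
    by (simp add: mult.commute)
  then have "exit_fun N C (p + \<delta>) \<le> \<theta>" using p by (simp add: mult_le_cancel_right_pos)
  then have "exit_fun N C p \<le> \<theta> / (1 - \<theta>) * exp (- (K * ln (real N)) * (p + \<delta> - p))"
    using p N exit_fun_nonneg[OF code] exit_fun_le_one[OF code] exit_deriv K \<theta>
    by (intro logistic_growth_bound[where h' = "deriv (exit_fun N C)"])
      (auto simp: DERIV_deriv_iff_real_differentiable)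
  then have "real N * exit_fun N C p \<le> real N * (\<theta> / (1 - \<theta>) * exp (- (K * ln (real N)) * \<delta>))"
    by (intro mult_left_mono) simp_all
  also have "\<dots> = \<theta> / (1 - \<theta>) * real N powr (1 - K * \<delta>)"
    using N by (simp add: powr_def exp_diff exp_minus divide_inverse algebra_simps)
  finally show ?thesis
    using min_dist_block_MAP_erasure_le[OF code p(1)] p by linarith
qed

lemma tendsto_zero_of_mult_le_powr:
  fixes b d L :: "nat \<Rightarrow> real" and c M :: real
  assumes L: "filterlim L at_top sequentially"
    and d: "\<And>n. 0 < d n" "(\<lambda>n. ln (d n) / ln (L n)) \<longlonglongrightarrow> 1"
    and c: "0 < c" and M: "0 \<le> M"
    and bound: "eventually (\<lambda>n. 0 \<le> b n \<and> d n * b n \<le> M * L n powr (1 - c)) sequentially"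
  shows "b \<longlonglongrightarrow> 0"
proof (rule tendsto_sandwich[OF _ _ tendsto_const])
  have "eventually (\<lambda>n. 1 < L n) sequentially"
    using L by (simp add: filterlim_at_top_dense)
  moreover have "eventually (\<lambda>n. 1 - c / 2 < ln (d n) / ln (L n)) sequentially"
    using d(2) c by (intro order_tendstoD) auto
  ultimately show "eventually (\<lambda>n. b n \<le> M * L n powr (- c / 2)) sequentially"
    using bound
  proof eventually_elim
    case (elim n)
    then have "(1 - c / 2) * ln (L n) < ln (d n)" by (simp add: pos_less_divide_eq)
    then have "exp ((1 - c / 2) * ln (L n)) < d n"
      using d(1)[of n] by (metis exp_less_cancel_iff exp_ln)
    then have d_large: "L n powr (1 - c / 2) < d n"
      using elim(1) by (simp add: powr_def)
    have "b n \<le> M * L n powr (1 - c) / d n"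
      using elim(3) d(1)[of n] by (simp add: pos_le_divide_eq mult.commute)
    also have "\<dots> \<le> M * L n powr (1 - c) / L n powr (1 - c / 2)"
      using d_large elim(1) d(1)[of n] M by (intro divide_left_mono) auto
    also have "\<dots> = M * L n powr ((1 - c) - (1 - c / 2))"
      by (simp only: powr_diff times_divide_eq_right)
    also have "\<dots> = M * L n powr (- c / 2)" by simp
    finally show ?case .
  qed
  show "eventually (\<lambda>n. 0 \<le> b n) sequentially" using bound by eventually_elim simp
  show "(\<lambda>n. M * L n powr (- c / 2)) \<longlonglongrightarrow> 0"
    using tendsto_neg_powr[OF _ L] c by (intro tendsto_mult_right_zero) simp
qed

theorem theorem4:
  fixes N :: "nat \<Rightarrow> nat" and C :: "nat \<Rightarrow> nat set set" and r K :: real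
  assumes codes: "\<And>n. binary_linear_code (N n) (C n)"
    and proper: "\<And>n. proper_code (N n) (C n)"
    and dmin2: "\<And>n. min_dist (C n) \<ge> 2"
    and len: "filterlim N at_top sequentially"
    and rate: "(\<lambda>n. code_rate (N n) (C n)) \<longlonglongrightarrow> r"
    and r: "0 < r" "r < 1"
    and K: "K > 0"
    and exit_deriv: "\<And>n p. 0 < p \<Longrightarrow> p < 1 \<Longrightarrow>
        exit_fun (N n) (C n) differentiable (at p) \<and>
        deriv (exit_fun (N n) (C n)) p \<ge>
          K * ln (real (N n)) * exit_fun (N n) (C n) p * (1 - exit_fun (N n) (C n) p)"
    and dist: "(\<lambda>n. ln (real (min_dist (C n))) / ln (real (N n))) \<longlonglongrightarrow> 1"
  shows "capacity_achieving_BEC N C r"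
  unfolding capacity_achieving_BEC_def
proof (intro allI impI)
  fix p :: real assume p: "0 \<le> p \<and> p < 1 - r"
  show "(\<lambda>n. block_MAP_erasure (N n) (C n) p) \<longlonglongrightarrow> 0"
  proof (cases "p = 0")
    case True
    then show ?thesis using block_MAP_erasure_zero[OF codes] by simp
  next
    case False
    define \<delta> where "\<delta> = (1 - r - p) / 2"
    define \<theta> where "\<theta> = (r + \<delta> / 2) / (r + \<delta>)"
    have \<delta>: "0 < p" "0 < \<delta>" "p + \<delta> < 1" using p r False unfolding \<delta>_def by (auto simp: field_simps)
    have \<theta>: "0 < \<theta>" "\<theta> < 1" "\<theta> * (1 - (p + \<delta>)) = r + \<delta> / 2"
      using \<delta> r unfolding \<theta>_def by (auto simp: \<delta>_def field_simps)
    have "eventually (\<lambda>n. code_rate (N n) (C n) < r + \<delta> / 2) sequentially"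
      using \<delta> by (intro order_tendstoD(2)[OF rate]) simp
    then have "eventually (\<lambda>n. 0 < N n \<and> code_rate (N n) (C n) \<le> \<theta> * (1 - (p + \<delta>))) sequentially"
      using len[unfolded filterlim_at_top, rule_format, of 1]
      by eventually_elim (use \<theta>(3) in auto)
    then have bound: "eventually (\<lambda>n. 0 \<le> block_MAP_erasure (N n) (C n) p \<and>
        real (min_dist (C n)) * block_MAP_erasure (N n) (C n) p
          \<le> \<theta> / (1 - \<theta>) * real (N n) powr (1 - K * \<delta>)) sequentially"
    proof eventually_elim
      case (elim n)
      show ?case
        using min_dist_block_MAP_erasure_le_powr[OF codes conjunct1[OF elim] \<delta> conjunct2[OF elim] \<theta>(2)
            less_imp_le[OF K] exit_deriv]
          block_MAP_erasure_nonneg[OF codes, of p] \<delta> by simp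
    qed
    show ?thesis
    proof (rule tendsto_zero_of_mult_le_powr[OF filterlim_compose[OF filterlim_real_sequentially len]
          _ dist _ _ bound])
      show "0 < real (min_dist (C n))" for n using dmin2[of n] by simp
    qed (use \<theta> K \<delta> in auto)
  qed
qed

end
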